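(* Let $M$ be a CNM of size $n\ge 1$. Then there exist $N\ge 0$ and a sequence $M_0=M,M_1,\dots,M_N$ of CNMs of size $n$ such that for each $0\le i<N$, $M_{i+1}$ is obtained from $M_i$ by interchanging two rows or interchanging two columns, and $M_N$ is upper-diagonal.
   Context: A complete non-ambiguous matrix (CNM) of size $n$ is an $n\times n$ matrix $M=(m_{i,j})$ with entries in $\{0,1\}$ whose support $T=\{(i,j): m_{i,j}=1\}$ (whose elements are called vertices) satisfies: (1) $(1,1)\in T$; (2) for every $p=(i,j)\in T$ with $p\neq(1,1)$, exactly one of the following holds: there is $(i',j)\in T$ with $i'<i$, or there is $(i,j')\in T$ with $j'<j$; (3) every row and every column of $M$ contains at least one vertex; (4) define the parent of $p=(i,j)\neq(1,1)$ to be $(i',j)$ with $i'<i$ maximal if such a vertex exists, and otherwise $(i,j')$ with $j'<j$ maximal; then every vertex is the parent of either zero or exactly two vertices. A vertex with no children is a leaf. A CNM of size $n$ is upper-diagonal if its leaves are exactly the positions $(i,n+1-i)$, $1\le i\le n$. *)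

theory Defs
  imports Main "HOL-Combinatorics.Transposition"
begin

text \<open>An n x n 0/1 matrix is represented by its support T, a set of positions (i,j)
  with 1 <= i,j <= n (1-indexed rows and columns).\<close>

definition has_above :: "(nat \<times> nat) set \<Rightarrow> nat \<times> nat \<Rightarrow> bool" where
  "has_above T p = (\<exists>i'. i' < fst p \<and> (i', snd p) \<in> T)"

definition has_left :: "(nat \<times> nat) set \<Rightarrow> nat \<times> nat \<Rightarrow> bool" where
  "has_left T p = (\<exists>j'. j' < snd p \<and> (fst p, j') \<in> T)"

definition cnm_parent :: "(nat \<times> nat) set \<Rightarrow> nat \<times> nat \<Rightarrow> nat \<times> nat" where
  "cnm_parent T p =
     (if has_above T p
      then (GREATEST i'. i' < fst p \<and> (i', snd p) \<in> T, snd p)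
      else (fst p, GREATEST j'. j' < snd p \<and> (fst p, j') \<in> T))"

definition cnm_children :: "(nat \<times> nat) set \<Rightarrow> nat \<times> nat \<Rightarrow> (nat \<times> nat) set" where
  "cnm_children T p = {q \<in> T. q \<noteq> (1,1) \<and> cnm_parent T q = p}"

definition CNM :: "nat \<Rightarrow> (nat \<times> nat) set \<Rightarrow> bool" where
  "CNM n T \<longleftrightarrow>
     T \<subseteq> {1..n} \<times> {1..n}
   \<and> (1,1) \<in> T
   \<and> (\<forall>p\<in>T. p \<noteq> (1,1) \<longrightarrow> (has_above T p \<noteq> has_left T p))
   \<and> (\<forall>i\<in>{1..n}. \<exists>j. (i,j) \<in> T)
   \<and> (\<forall>j\<in>{1..n}. \<exists>i. (i,j) \<in> T)
   \<and> (\<forall>p\<in>T. card (cnm_children T p) = 0 \<or> card (cnm_children T p) = 2)"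

definition cnm_leaves :: "(nat \<times> nat) set \<Rightarrow> (nat \<times> nat) set" where
  "cnm_leaves T = {p \<in> T. cnm_children T p = {}}"

definition upper_diagonal_CNM :: "nat \<Rightarrow> (nat \<times> nat) set \<Rightarrow> bool" where
  "upper_diagonal_CNM n T \<longleftrightarrow> CNM n T \<and> cnm_leaves T = {(i, n + 1 - i) | i. i \<in> {1..n}}"

definition swap_rows :: "nat \<Rightarrow> nat \<Rightarrow> (nat \<times> nat) set \<Rightarrow> (nat \<times> nat) set" where
  "swap_rows a b T = (\<lambda>(i,j). (transpose a b i, j)) ` T"

definition swap_cols :: "nat \<Rightarrow> nat \<Rightarrow> (nat \<times> nat) set \<Rightarrow> (nat \<times> nat) set" where
  "swap_cols a b T = (\<lambda>(i,j). (i, transpose a b j)) ` T"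

definition row_or_col_swap :: "nat \<Rightarrow> (nat \<times> nat) set \<Rightarrow> (nat \<times> nat) set \<Rightarrow> bool" where
  "row_or_col_swap n T T' \<longleftrightarrow>
     (\<exists>a\<in>{1..n}. \<exists>b\<in>{1..n}. a \<noteq> b \<and> (T' = swap_rows a b T \<or> T' = swap_cols a b T))"

end

theory Submission
  imports Defs "HOL-Library.List_Lexorder" "HOL-Library.Product_Lexorder"
begin

text \<open>The vertices of a CNM form a binary tree in which the children of a vertex are the next
  vertex below it in its column and the next vertex to its right in its row. Since a vertex has
  0 or 2 children, it has a vertex below it iff it has one to its right; so the leaves are exactly
  the last vertices of the rows, and also exactly the last vertices of the columns.

  Key every row and every column by the tree address of its leaf, ordered lexicographically with
  a step down before a step right. Then rows meeting in a column have decreasing keys, columns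
  meeting in a row have increasing keys, and a row and a column with a common leaf have equal
  keys. In particular two adjacent rows whose keys increase share no column, so interchanging them
  preserves the vertical order in every column; the result is again a CNM with the same tree, and
  the invariant survives with permuted keys. The same holds for columns. Bubble sort thus ends with
  row keys decreasing and column keys increasing, which forces the leaf of row r into column
  n + 1 - r.\<close>

subsection \<open>Parents and children\<close>

lemma CNM_bounds:
  assumes "CNM n T" "(i,j) \<in> T"
  shows "1 \<le> i" "i \<le> n" "1 \<le> j" "j \<le> n"
  using assms unfolding CNM_def by auto

lemma CNM_finite: "CNM n T \<Longrightarrow> finite T"
  unfolding CNM_def by (meson finite_SigmaI finite_atLeastAtMost finite_subset)

lemma CNM_has_above_neq_has_left:
  "CNM n T \<Longrightarrow> p \<in> T \<Longrightarrow> p \<noteq> (1,1) \<Longrightarrow> has_above T p \<noteq> has_left T p"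
  by (simp add: CNM_def)

definition col_succ :: "(nat \<times> nat) set \<Rightarrow> nat \<Rightarrow> nat \<Rightarrow> nat \<Rightarrow> bool" where
  "col_succ T c r s \<longleftrightarrow> (r,c) \<in> T \<and> (s,c) \<in> T \<and> r < s \<and> (\<forall>x. r < x \<longrightarrow> x < s \<longrightarrow> (x,c) \<notin> T)"

definition row_succ :: "(nat \<times> nat) set \<Rightarrow> nat \<Rightarrow> nat \<Rightarrow> nat \<Rightarrow> bool" where
  "row_succ T r c d \<longleftrightarrow> (r,c) \<in> T \<and> (r,d) \<in> T \<and> c < d \<and> (\<forall>y. c < y \<longrightarrow> y < d \<longrightarrow> (r,y) \<notin> T)"

lemma col_succ_unique: "col_succ T c r s \<Longrightarrow> col_succ T c r s' \<Longrightarrow> s = s'"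
  unfolding col_succ_def by (metis linorder_neqE_nat)

lemma row_succ_unique: "row_succ T r c d \<Longrightarrow> row_succ T r c d' \<Longrightarrow> d = d'"
  unfolding row_succ_def by (metis linorder_neqE_nat)

lemma ex_col_succ_iff: "(\<exists>s. col_succ T c r s) \<longleftrightarrow> (r,c) \<in> T \<and> (\<exists>s>r. (s,c) \<in> T)"
proof
  assume "(r,c) \<in> T \<and> (\<exists>s>r. (s,c) \<in> T)"
  then show "\<exists>s. col_succ T c r s"
    using exists_least_iff[of "\<lambda>s. r < s \<and> (s,c) \<in> T"] unfolding col_succ_def by blast
qed (auto simp: col_succ_def)

lemma ex_row_succ_iff: "(\<exists>d. row_succ T r c d) \<longleftrightarrow> (r,c) \<in> T \<and> (\<exists>d>c. (r,d) \<in> T)"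
proof
  assume "(r,c) \<in> T \<and> (\<exists>d>c. (r,d) \<in> T)"
  then show "\<exists>d. row_succ T r c d"
    using exists_least_iff[of "\<lambda>d. c < d \<and> (r,d) \<in> T"] unfolding row_succ_def by blast
qed (auto simp: row_succ_def)

lemma Greatest_below_nat:
  fixes P :: "nat \<Rightarrow> bool"
  assumes "P x" "x < i"
  defines "g \<equiv> GREATEST y. y < i \<and> P y"
  shows "g < i" "P g" "\<And>y. g < y \<Longrightarrow> y < i \<Longrightarrow> \<not> P y"
proof -
  have bounded: "\<And>y. y < i \<and> P y \<Longrightarrow> y \<le> i" by simp
  show "g < i" "P g"
    using GreatestI_nat[of "\<lambda>y. y < i \<and> P y" x i] assms bounded by (simp_all add: g_def)
  show "\<not> P y" if "g < y" "y < i" for y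
    using Greatest_le_nat[of "\<lambda>y. y < i \<and> P y" y i] that bounded unfolding g_def by fastforce
qed

lemma cnm_parent_above:
  assumes "has_above T (i,j)"
  obtains g where "cnm_parent T (i,j) = (g,j)" "g < i" "(g,j) \<in> T"
    "\<And>x. g < x \<Longrightarrow> x < i \<Longrightarrow> (x,j) \<notin> T"
proof -
  obtain x where "x < i" "(x,j) \<in> T" using assms by (auto simp: has_above_def)
  from Greatest_below_nat[of "\<lambda>y. (y,j) \<in> T", OF this(2,1)] show ?thesis
    using that assms by (simp add: cnm_parent_def)
qed

lemma cnm_parent_left:
  assumes "\<not> has_above T (i,j)" "has_left T (i,j)"
  obtains g where "cnm_parent T (i,j) = (i,g)" "g < j" "(i,g) \<in> T"
    "\<And>y. g < y \<Longrightarrow> y < j \<Longrightarrow> (i,y) \<notin> T"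
proof -
  obtain y where "y < j" "(i,y) \<in> T" using assms by (auto simp: has_left_def)
  from Greatest_below_nat[of "\<lambda>y. (i,y) \<in> T", OF this(2,1)] show ?thesis
    using that assms by (simp add: cnm_parent_def)
qed

lemma cnm_parent_col_succ:
  assumes succ: "col_succ T c r s"
  shows "cnm_parent T (s,c) = (r,c)"
proof -
  have "has_above T (s,c)" using succ by (auto simp: col_succ_def has_above_def)
  then obtain g where "cnm_parent T (s,c) = (g,c)" "g < s" "(g,c) \<in> T"
    "\<And>x. g < x \<Longrightarrow> x < s \<Longrightarrow> (x,c) \<notin> T"
    using cnm_parent_above by blast
  with succ show ?thesis unfolding col_succ_def by (metis linorder_neqE_nat)
qed

lemma cnm_parent_row_succ:
  assumes succ: "row_succ T r c d" and not_above: "\<not> has_above T (r,d)"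
  shows "cnm_parent T (r,d) = (r,c)"
proof -
  have "has_left T (r,d)" using succ by (auto simp: row_succ_def has_left_def)
  then obtain g where "cnm_parent T (r,d) = (r,g)" "g < d" "(r,g) \<in> T"
    "\<And>y. g < y \<Longrightarrow> y < d \<Longrightarrow> (r,y) \<notin> T"
    using cnm_parent_left[OF not_above] by blast
  with succ show ?thesis unfolding row_succ_def by (metis linorder_neqE_nat)
qed

text \<open>Only the first conjuncts of CNM are assumed, so that the lemma also applies to a
  permuted matrix before it is known to be a CNM.\<close>

lemma mem_cnm_children:
  assumes box: "T \<subseteq> {1..n} \<times> {1..n}"
    and excl: "\<forall>p\<in>T. p \<noteq> (1,1) \<longrightarrow> has_above T p \<noteq> has_left T p"
  shows "(x,y) \<in> cnm_children T (r,c) \<longleftrightarrow> y = c \<and> col_succ T c r x \<or> x = r \<and> row_succ T r c y"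
proof
  assume child: "(x,y) \<in> cnm_children T (r,c)"
  then have xy: "(x,y) \<in> T" "(x,y) \<noteq> (1,1)" and par: "cnm_parent T (x,y) = (r,c)"
    by (auto simp: cnm_children_def)
  show "y = c \<and> col_succ T c r x \<or> x = r \<and> row_succ T r c y"
  proof (cases "has_above T (x,y)")
    case True
    then obtain g where "cnm_parent T (x,y) = (g,y)" "g < x" "(g,y) \<in> T"
      "\<And>z. g < z \<Longrightarrow> z < x \<Longrightarrow> (z,y) \<notin> T"
      using cnm_parent_above by blast
    then show ?thesis using par xy by (auto simp: col_succ_def)
  next
    case False
    then have "has_left T (x,y)" using excl xy by blast
    then obtain g where "cnm_parent T (x,y) = (x,g)" "g < y" "(x,g) \<in> T"
      "\<And>z. g < z \<Longrightarrow> z < y \<Longrightarrow> (x,z) \<notin> T"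
      using cnm_parent_left[OF False] by blast
    then show ?thesis using par xy by (auto simp: row_succ_def)
  qed
next
  assume "y = c \<and> col_succ T c r x \<or> x = r \<and> row_succ T r c y"
  then show "(x,y) \<in> cnm_children T (r,c)"
  proof
    assume succ: "y = c \<and> col_succ T c r x"
    then have "(r,c) \<in> T" "(x,y) \<in> T" "r < x" by (auto simp: col_succ_def)
    moreover have "cnm_parent T (x,y) = (r,c)" using succ cnm_parent_col_succ by blast
    ultimately show ?thesis using subsetD[OF box] by (fastforce simp: cnm_children_def)
  next
    assume succ: "x = r \<and> row_succ T r c y"
    then have "(r,c) \<in> T" "(x,y) \<in> T" "c < y" "has_left T (x,y)"
      by (auto simp: row_succ_def has_left_def)
    moreover have "(x,y) \<noteq> (1,1)" using calculation subsetD[OF box] by fastforce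
    ultimately show ?thesis using excl succ cnm_parent_row_succ by (auto simp: cnm_children_def)
  qed
qed

lemma CNM_children_eq:
  assumes "CNM n T"
  shows "cnm_children T (r,c) = {(s,c) | s. col_succ T c r s} \<union> {(r,d) | d. row_succ T r c d}"
proof -
  have "\<And>x y. (x,y) \<in> cnm_children T (r,c) \<longleftrightarrow> y = c \<and> col_succ T c r x \<or> x = r \<and> row_succ T r c y"
    using assms mem_cnm_children unfolding CNM_def by blast
  then show ?thesis by auto
qed

lemma CNM_below_iff_right:
  assumes T: "CNM n T" and rc: "(r,c) \<in> T"
  shows "(\<exists>s>r. (s,c) \<in> T) \<longleftrightarrow> (\<exists>d>c. (r,d) \<in> T)"
proof -
  define A where "A = {(s,c) | s. col_succ T c r s}"
  define B where "B = {(r,d) | d. row_succ T r c d}"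
  have children: "cnm_children T (r,c) = A \<union> B"
    unfolding A_def B_def by (rule CNM_children_eq[OF T])
  have "A \<subseteq> T" "B \<subseteq> T" by (auto simp: A_def B_def col_succ_def row_succ_def)
  then have fin: "finite A" "finite B" using CNM_finite[OF T] finite_subset by blast+
  have "A \<inter> B = {}" by (auto simp: A_def B_def col_succ_def)
  then have "card (cnm_children T (r,c)) = card A + card B"
    using children fin by (simp add: card_Un_disjoint)
  moreover have "card A \<le> 1" "card B \<le> 1"
    using fin col_succ_unique row_succ_unique by (auto simp: card_le_Suc0_iff_eq A_def B_def)
  moreover have "card (cnm_children T (r,c)) = 0 \<or> card (cnm_children T (r,c)) = 2"
    using T rc by (simp add: CNM_def)
  ultimately have "card A = card B" by linarith
  then have "A = {} \<longleftrightarrow> B = {}" using fin card_0_eq by metis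
  then have "(\<exists>s. col_succ T c r s) \<longleftrightarrow> (\<exists>d. row_succ T r c d)" by (auto simp: A_def B_def)
  then show ?thesis using ex_col_succ_iff ex_row_succ_iff rc by simp
qed

lemma CNM_leaf_iff:
  assumes T: "CNM n T" and rc: "(r,c) \<in> T"
  shows "(r,c) \<in> cnm_leaves T \<longleftrightarrow> \<not> (\<exists>d>c. (r,d) \<in> T)"
    and "(r,c) \<in> cnm_leaves T \<longleftrightarrow> \<not> (\<exists>s>r. (s,c) \<in> T)"
proof -
  have "cnm_children T (r,c) = {} \<longleftrightarrow> \<not> (\<exists>s. col_succ T c r s) \<and> \<not> (\<exists>d. row_succ T r c d)"
    unfolding CNM_children_eq[OF T] by blast
  then have "(r,c) \<in> cnm_leaves T \<longleftrightarrow> \<not> (\<exists>s>r. (s,c) \<in> T) \<and> \<not> (\<exists>d>c. (r,d) \<in> T)"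
    using rc ex_col_succ_iff ex_row_succ_iff by (simp add: cnm_leaves_def)
  then show "(r,c) \<in> cnm_leaves T \<longleftrightarrow> \<not> (\<exists>d>c. (r,d) \<in> T)"
    and "(r,c) \<in> cnm_leaves T \<longleftrightarrow> \<not> (\<exists>s>r. (s,c) \<in> T)"
    using CNM_below_iff_right[OF T rc] by blast+
qed

lemma CNM_rows_one_two_share_col:
  assumes T: "CNM n T" and "2 \<le> n"
  shows "\<exists>c. (1,c) \<in> T \<and> (2,c) \<in> T"
proof -
  have "\<exists>j. (2,j) \<in> T" using T assms(2) unfolding CNM_def by simp
  then obtain c where c: "(2,c) \<in> T" "\<forall>y<c. (2,y) \<notin> T"
    using exists_least_iff[of "\<lambda>y. (2,y) \<in> T"] by blast
  then have "\<not> has_left T (2,c)" by (auto simp: has_left_def)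
  then have "has_above T (2,c)" using CNM_has_above_neq_has_left[OF T c(1)] by auto
  then obtain i where "i < 2" "(i,c) \<in> T" by (auto simp: has_above_def)
  moreover from this have "1 \<le> i" using CNM_bounds[OF T] by blast
  ultimately have "i = 1" by linarith
  with \<open>(i,c) \<in> T\<close> c(1) show ?thesis by blast
qed

subsection \<open>Tree addresses\<close>

text \<open>The address of a vertex in the binary tree: its steps from the root, where False is a step
  down a column and True a step along a row.\<close>

function cnm_path :: "(nat \<times> nat) set \<Rightarrow> nat \<times> nat \<Rightarrow> bool list" where
  "cnm_path T p =
     (if p \<in> T \<and> p \<noteq> (1,1) \<and> (has_above T p \<or> has_left T p)
      then cnm_path T (cnm_parent T p) @ [\<not> has_above T p] else [])"
  by auto
termination
proof (relation "measure (\<lambda>(T,p). fst p + snd p)")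
  fix T :: "(nat \<times> nat) set" and p :: "nat \<times> nat"
  assume p: "p \<in> T \<and> p \<noteq> (1,1) \<and> (has_above T p \<or> has_left T p)"
  obtain i j where ij: "p = (i,j)" by fastforce
  have "fst (cnm_parent T (i,j)) + snd (cnm_parent T (i,j)) < i + j"
  proof (cases "has_above T (i,j)")
    case True
    then show ?thesis by (rule cnm_parent_above) simp
  next
    case False
    then have "has_left T (i,j)" using p ij by simp
    with False show ?thesis by (rule cnm_parent_left) simp
  qed
  then show "((T, cnm_parent T p), (T, p)) \<in> measure (\<lambda>(T,p). fst p + snd p)" using ij by simp
qed simp

declare cnm_path.simps [simp del]

lemma cnm_path_col_succ:
  assumes T: "CNM n T" and succ: "col_succ T c r s"
  shows "cnm_path T (s,c) = cnm_path T (r,c) @ [False]"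
proof -
  have "(r,c) \<in> T" "(s,c) \<in> T" "r < s" using succ by (auto simp: col_succ_def)
  then have "(s,c) \<in> T" "(s,c) \<noteq> (1,1)" "has_above T (s,c)"
    using CNM_bounds(1)[OF T] by (auto simp: has_above_def)
  then show ?thesis using cnm_parent_col_succ[OF succ] by (subst cnm_path.simps) simp
qed

lemma cnm_path_row_succ:
  assumes T: "CNM n T" and succ: "row_succ T r c d"
  shows "cnm_path T (r,d) = cnm_path T (r,c) @ [True]"
proof -
  have "(r,c) \<in> T" "(r,d) \<in> T" "c < d" using succ by (auto simp: row_succ_def)
  then have rd: "(r,d) \<in> T" "(r,d) \<noteq> (1,1)" "has_left T (r,d)"
    using CNM_bounds(3)[OF T] by (auto simp: has_left_def)
  then have "\<not> has_above T (r,d)" using CNM_has_above_neq_has_left[OF T] by blast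
  then show ?thesis using rd cnm_parent_row_succ[OF succ] by (subst cnm_path.simps) simp
qed

lemma cnm_path_below:
  assumes T: "CNM n T" and rc: "(r,c) \<in> T"
  shows "(s,c) \<in> T \<Longrightarrow> r < s \<Longrightarrow> \<exists>B. cnm_path T (s,c) = cnm_path T (r,c) @ False # B"
proof (induction s rule: less_induct)
  case (less s)
  have "has_above T (s,c)" using rc less.prems by (auto simp: has_above_def)
  then obtain g where g: "cnm_parent T (s,c) = (g,c)" "g < s" "(g,c) \<in> T"
    "\<And>x. g < x \<Longrightarrow> x < s \<Longrightarrow> (x,c) \<notin> T"
    using cnm_parent_above by blast
  then have path_s: "cnm_path T (s,c) = cnm_path T (g,c) @ [False]"
    using cnm_path_col_succ[OF T] less.prems by (simp add: col_succ_def)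
  have "r \<le> g" using g(4) rc less.prems(2) by (meson not_le)
  then consider "r = g" | "r < g" by linarith
  then show ?case
  proof cases
    case 2
    then obtain B where "cnm_path T (g,c) = cnm_path T (r,c) @ False # B" using less.IH g by blast
    then show ?thesis using path_s by auto
  qed (use path_s in auto)
qed

lemma cnm_path_right:
  assumes T: "CNM n T" and rc: "(r,c) \<in> T"
  shows "(r,d) \<in> T \<Longrightarrow> c < d \<Longrightarrow> \<exists>B. cnm_path T (r,d) = cnm_path T (r,c) @ True # B"
proof (induction d rule: less_induct)
  case (less d)
  have left: "has_left T (r,d)" using rc less.prems by (auto simp: has_left_def)
  moreover have "(r,d) \<noteq> (1,1)" using CNM_bounds[OF T rc] less.prems(2) by auto
  ultimately have "\<not> has_above T (r,d)" using CNM_has_above_neq_has_left[OF T less.prems(1)] by blast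
  then obtain g where g: "cnm_parent T (r,d) = (r,g)" "g < d" "(r,g) \<in> T"
    "\<And>y. g < y \<Longrightarrow> y < d \<Longrightarrow> (r,y) \<notin> T"
    using cnm_parent_left left by blast
  then have path_d: "cnm_path T (r,d) = cnm_path T (r,g) @ [True]"
    using cnm_path_row_succ[OF T] less.prems by (simp add: row_succ_def)
  have "c \<le> g" using g(4) rc less.prems(2) by (meson not_le)
  then consider "c = g" | "c < g" by linarith
  then show ?case
  proof cases
    case 2
    then obtain B where "cnm_path T (r,g) = cnm_path T (r,c) @ True # B" using less.IH g by blast
    then show ?thesis using path_d by auto
  qed (use path_d in auto)
qed

lemma append_False_less_append_True: "(P @ False # X :: bool list) < P @ True # Y"
  by (induction P) auto

subsection \<open>Leaves\<close>

definition last_in_row :: "(nat \<times> nat) set \<Rightarrow> nat \<Rightarrow> nat" where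
  "last_in_row T r = Max {c. (r,c) \<in> T}"

definition last_in_col :: "(nat \<times> nat) set \<Rightarrow> nat \<Rightarrow> nat" where
  "last_in_col T c = Max {r. (r,c) \<in> T}"

lemma last_in_row:
  assumes T: "CNM n T" and rc: "(r,c) \<in> T"
  shows "(r, last_in_row T r) \<in> T" "c \<le> last_in_row T r"
proof -
  have "{c. (r,c) \<in> T} \<subseteq> snd ` T" by force
  then have fin: "finite {c. (r,c) \<in> T}" using CNM_finite[OF T] finite_surj by blast
  show "(r, last_in_row T r) \<in> T" using Max_in[OF fin] rc unfolding last_in_row_def by blast
  show "c \<le> last_in_row T r" using Max_ge[OF fin] rc unfolding last_in_row_def by blast
qed

lemma last_in_col:
  assumes T: "CNM n T" and rc: "(r,c) \<in> T"
  shows "(last_in_col T c, c) \<in> T" "r \<le> last_in_col T c"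
proof -
  have "{r. (r,c) \<in> T} \<subseteq> fst ` T" by force
  then have fin: "finite {r. (r,c) \<in> T}" using CNM_finite[OF T] finite_surj by blast
  show "(last_in_col T c, c) \<in> T" using Max_in[OF fin] rc unfolding last_in_col_def by blast
  show "r \<le> last_in_col T c" using Max_ge[OF fin] rc unfolding last_in_col_def by blast
qed

lemma CNM_leaf_iff_last:
  assumes T: "CNM n T" and rc: "(r,c) \<in> T"
  shows "(r,c) \<in> cnm_leaves T \<longleftrightarrow> c = last_in_row T r"
    and "(r,c) \<in> cnm_leaves T \<longleftrightarrow> r = last_in_col T c"
proof -
  have "(\<exists>d>c. (r,d) \<in> T) \<longleftrightarrow> c \<noteq> last_in_row T r"
    using last_in_row[OF T] rc by (metis le_neq_implies_less not_le)
  moreover have "(\<exists>s>r. (s,c) \<in> T) \<longleftrightarrow> r \<noteq> last_in_col T c"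
    using last_in_col[OF T] rc by (metis le_neq_implies_less not_le)
  ultimately show "(r,c) \<in> cnm_leaves T \<longleftrightarrow> c = last_in_row T r"
    and "(r,c) \<in> cnm_leaves T \<longleftrightarrow> r = last_in_col T c"
    using CNM_leaf_iff[OF T rc] by simp_all
qed

lemma CNM_leaves_eq:
  assumes T: "CNM n T"
  shows "cnm_leaves T = {(r, last_in_row T r) | r. r \<in> {1..n}}"
proof (intro set_eqI iffI)
  fix p assume leaf: "p \<in> cnm_leaves T"
  obtain r c where p: "p = (r,c)" by fastforce
  with leaf have rc: "(r,c) \<in> T" by (simp add: cnm_leaves_def)
  then have "r \<in> {1..n}" using CNM_bounds[OF T] by simp
  moreover have "c = last_in_row T r" using CNM_leaf_iff_last(1)[OF T rc] leaf p by simp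
  ultimately show "p \<in> {(r, last_in_row T r) | r. r \<in> {1..n}}" using p by blast
next
  fix p assume "p \<in> {(r, last_in_row T r) | r. r \<in> {1..n}}"
  then obtain r where p: "p = (r, last_in_row T r)" "r \<in> {1..n}" by blast
  then obtain c where "(r,c) \<in> T" using T unfolding CNM_def by blast
  then show "p \<in> cnm_leaves T" using p last_in_row[OF T] CNM_leaf_iff_last(1)[OF T] by blast
qed

subsection \<open>Swapping rows and columns\<close>

lemma mem_swap_rows [simp]: "(x,y) \<in> swap_rows a b T \<longleftrightarrow> (transpose a b x, y) \<in> T"
  unfolding swap_rows_def by (force intro: rev_image_eqI[of "(transpose a b x, y)"])

lemma mem_swap_cols [simp]: "(x,y) \<in> swap_cols a b T \<longleftrightarrow> (x, transpose a b y) \<in> T"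
  unfolding swap_cols_def by (force intro: rev_image_eqI[of "(x, transpose a b y)"])

lemma card_swap_rows: "card (swap_rows a b S) = card S"
  unfolding swap_rows_def by (rule card_image) (auto intro!: inj_onI dest: transpose_eq_imp_eq)

definition transposed :: "(nat \<times> nat) set \<Rightarrow> (nat \<times> nat) set" where
  "transposed T = prod.swap ` T"

lemma mem_transposed [simp]: "(x,y) \<in> transposed T \<longleftrightarrow> (y,x) \<in> T"
  by (force simp: transposed_def)

lemma card_transposed: "card (transposed S) = card S"
  unfolding transposed_def by (simp add: card_image)

lemma swap_cols_eq_transposed: "swap_cols a b T = transposed (swap_rows a b (transposed T))"
  by fastforce

lemma has_above_transposed [simp]: "has_above (transposed T) (x,y) = has_left T (y,x)"
  by (simp add: has_above_def has_left_def)

lemma has_left_transposed [simp]: "has_left (transposed T) (x,y) = has_above T (y,x)"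
  by (simp add: has_above_def has_left_def)

lemma col_succ_transposed [simp]: "col_succ (transposed T) c r s = row_succ T c r s"
  by (simp add: col_succ_def row_succ_def)

lemma row_succ_transposed [simp]: "row_succ (transposed T) r c d = col_succ T r c d"
  by (simp add: col_succ_def row_succ_def)

lemma CNM_transposed:
  assumes T: "CNM n T"
  shows "CNM n (transposed T)"
proof -
  have box: "transposed T \<subseteq> {1..n} \<times> {1..n}"
  proof
    fix p assume "p \<in> transposed T"
    then show "p \<in> {1..n} \<times> {1..n}" using CNM_bounds[OF T, of "snd p" "fst p"] by (cases p) simp
  qed
  have excl: "\<forall>p\<in>transposed T. p \<noteq> (1,1) \<longrightarrow> has_above (transposed T) p \<noteq> has_left (transposed T) p"
  proof (intro ballI impI)
    fix p assume "p \<in> transposed T" "p \<noteq> (1,1)"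
    then show "has_above (transposed T) p \<noteq> has_left (transposed T) p"
      using CNM_has_above_neq_has_left[OF T, of "prod.swap p"] by (cases p) auto
  qed
  have "cnm_children (transposed T) (r,c) = transposed (cnm_children T (c,r))" for r c
  proof (rule set_eqI)
    fix p :: "nat \<times> nat"
    show "p \<in> cnm_children (transposed T) (r,c) \<longleftrightarrow> p \<in> transposed (cnm_children T (c,r))"
      using mem_cnm_children[OF box excl] by (cases p) (auto simp: CNM_children_eq[OF T])
  qed
  then have card: "card (cnm_children (transposed T) p) = card (cnm_children T (prod.swap p))" for p
    by (cases p) (simp add: card_transposed)
  show ?thesis
    unfolding CNM_def
  proof (intro conjI ballI impI)
    show "(1,1) \<in> transposed T" using T by (simp add: CNM_def)
    show "\<exists>j. (i,j) \<in> transposed T" if "i \<in> {1..n}" for i using T that by (simp add: CNM_def)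
    show "\<exists>i. (i,j) \<in> transposed T" if "j \<in> {1..n}" for j using T that by (simp add: CNM_def)
    show "card (cnm_children (transposed T) p) = 0 \<or> card (cnm_children (transposed T) p) = 2"
      if "p \<in> transposed T" for p
      using T that card by (cases p) (simp add: CNM_def)
  qed (use box excl in auto)
qed

context
  fixes T :: "(nat \<times> nat) set" and a b :: nat
  assumes transpose_preserves_col_order:
    "\<And>i i' j. (i,j) \<in> T \<Longrightarrow> (i',j) \<in> T \<Longrightarrow> i < i' \<longleftrightarrow> transpose a b i < transpose a b i'"
begin

lemma has_above_swap_rows:
  assumes xy: "(transpose a b x, y) \<in> T"
  shows "has_above (swap_rows a b T) (x,y) \<longleftrightarrow> has_above T (transpose a b x, y)"
proof
  assume "has_above (swap_rows a b T) (x,y)"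
  then obtain i where i: "i < x" "(transpose a b i, y) \<in> T" by (auto simp: has_above_def)
  then have "transpose a b i < transpose a b x"
    using transpose_preserves_col_order[OF i(2) xy] by simp
  with i(2) show "has_above T (transpose a b x, y)" by (auto simp: has_above_def)
next
  assume "has_above T (transpose a b x, y)"
  then obtain i where i: "i < transpose a b x" "(i, y) \<in> T" by (auto simp: has_above_def)
  then have "transpose a b i < x"
    using transpose_preserves_col_order[OF i(2) xy] by simp
  then show "has_above (swap_rows a b T) (x,y)"
    using i(2) by (auto simp: has_above_def intro!: exI[of _ "transpose a b i"])
qed

lemma col_succ_swap_rows:
  "col_succ (swap_rows a b T) c r s \<longleftrightarrow> col_succ T c (transpose a b r) (transpose a b s)"
proof (cases "(transpose a b r, c) \<in> T \<and> (transpose a b s, c) \<in> T")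
  case True
  let ?t = "transpose a b"
  have between: "r < x \<and> x < s \<longleftrightarrow> ?t r < ?t x \<and> ?t x < ?t s" if "(?t x, c) \<in> T" for x
    using transpose_preserves_col_order[OF True[THEN conjunct1] that]
      transpose_preserves_col_order[OF that True[THEN conjunct2]] by simp
  have "(\<forall>x. r < x \<longrightarrow> x < s \<longrightarrow> (?t x, c) \<notin> T) \<longleftrightarrow> (\<forall>z. ?t r < z \<longrightarrow> z < ?t s \<longrightarrow> (z, c) \<notin> T)"
  proof safe
    fix z assume "\<forall>x. r < x \<longrightarrow> x < s \<longrightarrow> (?t x, c) \<notin> T" "?t r < z" "z < ?t s" "(z, c) \<in> T"
    then show False using between[of "?t z"] by (auto dest!: spec[of _ "?t z"])
  next
    fix x assume "\<forall>z. ?t r < z \<longrightarrow> z < ?t s \<longrightarrow> (z, c) \<notin> T" "r < x" "x < s" "(?t x, c) \<in> T"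
    then show False using between[of x] by simp
  qed
  moreover have "r < s \<longleftrightarrow> ?t r < ?t s"
    using transpose_preserves_col_order[OF True[THEN conjunct1] True[THEN conjunct2]] by simp
  ultimately show ?thesis using True by (simp add: col_succ_def)
qed (auto simp: col_succ_def)

lemma cnm_children_swap_rows:
  assumes T: "CNM n T" and box: "swap_rows a b T \<subseteq> {1..n} \<times> {1..n}"
    and excl: "\<forall>p\<in>swap_rows a b T. p \<noteq> (1,1) \<longrightarrow>
      has_above (swap_rows a b T) p \<noteq> has_left (swap_rows a b T) p"
  shows "cnm_children (swap_rows a b T) (r,c) = swap_rows a b (cnm_children T (transpose a b r, c))"
proof (rule set_eqI)
  fix p :: "nat \<times> nat"
  let ?t = "transpose a b"
  obtain x y where p: "p = (x,y)" by fastforce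
  have "(x,y) \<in> cnm_children (swap_rows a b T) (r,c) \<longleftrightarrow>
      y = c \<and> col_succ T c (?t r) (?t x) \<or> x = r \<and> row_succ T (?t r) c y"
    using mem_cnm_children[OF box excl] col_succ_swap_rows by (simp add: row_succ_def)
  also have "\<dots> \<longleftrightarrow> (?t x, y) \<in> cnm_children T (?t r, c)"
    by (auto simp: CNM_children_eq[OF T] dest: transpose_eq_imp_eq)
  finally show "p \<in> cnm_children (swap_rows a b T) (r,c) \<longleftrightarrow>
      p \<in> swap_rows a b (cnm_children T (?t r, c))"
    using p by simp
qed

end

lemma CNM_swap_rows:
  assumes T: "CNM n T" and ab: "a \<in> {1..n}" "b \<in> {1..n}" "a \<noteq> 1" "b \<noteq> 1"
    and ord: "\<And>i i' j. (i,j) \<in> T \<Longrightarrow> (i',j) \<in> T \<Longrightarrow> i < i' \<longleftrightarrow> transpose a b i < transpose a b i'"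
  shows "CNM n (swap_rows a b T)"
proof -
  let ?t = "transpose a b" and ?T = "swap_rows a b T"
  have range: "?t x \<in> {1..n} \<longleftrightarrow> x \<in> {1..n}" for x using ab by (auto simp: transpose_def)
  have fix1: "?t x = 1 \<longleftrightarrow> x = 1" for x using ab by (auto simp: transpose_def)
  have box: "?T \<subseteq> {1..n} \<times> {1..n}"
  proof
    fix p assume "p \<in> ?T"
    then have "(?t (fst p), snd p) \<in> T" by (cases p) simp
    then show "p \<in> {1..n} \<times> {1..n}" using CNM_bounds[OF T] range[of "fst p"] by (cases p) auto
  qed
  have "has_above ?T (x,y) \<noteq> has_left ?T (x,y)" if "(x,y) \<in> ?T" "(x,y) \<noteq> (1,1)" for x y
    using that has_above_swap_rows[OF ord] CNM_has_above_neq_has_left[OF T, of "(?t x, y)"] fix1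
    by (auto simp: has_left_def)
  then have excl: "\<forall>p\<in>?T. p \<noteq> (1,1) \<longrightarrow> has_above ?T p \<noteq> has_left ?T p" by fast
  have "cnm_children ?T (r,c) = swap_rows a b (cnm_children T (?t r, c))" for r c
    using cnm_children_swap_rows[OF _ T box excl] ord by blast
  then have card: "card (cnm_children ?T p) = card (cnm_children T (?t (fst p), snd p))" for p
    by (cases p) (simp add: card_swap_rows)
  show ?thesis
    unfolding CNM_def
  proof (intro conjI ballI impI)
    show "(1,1) \<in> ?T" using T fix1[of 1] by (simp add: CNM_def)
    show "\<exists>j. (i,j) \<in> ?T" if "i \<in> {1..n}" for i using T that range by (simp add: CNM_def)
    show "\<exists>i. (i,j) \<in> ?T" if j: "j \<in> {1..n}" for j
    proof -
      obtain i where "(i,j) \<in> T" using T j unfolding CNM_def by blast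
      then have "(?t i, j) \<in> ?T" by simp
      then show ?thesis ..
    qed
    show "card (cnm_children ?T p) = 0 \<or> card (cnm_children ?T p) = 2" if "p \<in> ?T" for p
      using T that card by (cases p) (simp add: CNM_def)
  qed (use box excl in auto)
qed

lemma CNM_swap_cols:
  assumes T: "CNM n T" and ab: "a \<in> {1..n}" "b \<in> {1..n}" "a \<noteq> 1" "b \<noteq> 1"
    and ord: "\<And>i j j'. (i,j) \<in> T \<Longrightarrow> (i,j') \<in> T \<Longrightarrow> j < j' \<longleftrightarrow> transpose a b j < transpose a b j'"
  shows "CNM n (swap_cols a b T)"
  unfolding swap_cols_eq_transposed
  using CNM_transposed[OF CNM_swap_rows[OF CNM_transposed[OF T] ab]] ord by simp

lemma cnm_leaves_swap_rows:
  assumes T: "CNM n T" and T': "CNM n (swap_rows a b T)"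
  shows "cnm_leaves (swap_rows a b T) = swap_rows a b (cnm_leaves T)"
proof (rule set_eqI)
  fix p :: "nat \<times> nat"
  obtain x y where p: "p = (x,y)" by fastforce
  have leaf: "(u,v) \<in> cnm_leaves S \<longleftrightarrow> (u,v) \<in> S \<and> \<not> (\<exists>d>v. (u,d) \<in> S)" if "CNM n S" for S u v
    using CNM_leaf_iff(1)[OF that] by (auto simp: cnm_leaves_def)
  have "(x,y) \<in> cnm_leaves (swap_rows a b T) \<longleftrightarrow>
      (transpose a b x, y) \<in> T \<and> \<not> (\<exists>d>y. (transpose a b x, d) \<in> T)"
    using leaf[OF T'] by simp
  also have "\<dots> \<longleftrightarrow> (transpose a b x, y) \<in> cnm_leaves T" using leaf[OF T] by simp
  finally show "p \<in> cnm_leaves (swap_rows a b T) \<longleftrightarrow> p \<in> swap_rows a b (cnm_leaves T)"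
    using p by simp
qed

lemma cnm_leaves_swap_cols:
  assumes T: "CNM n T" and T': "CNM n (swap_cols a b T)"
  shows "cnm_leaves (swap_cols a b T) = swap_cols a b (cnm_leaves T)"
proof (rule set_eqI)
  fix p :: "nat \<times> nat"
  obtain x y where p: "p = (x,y)" by fastforce
  have leaf: "(u,v) \<in> cnm_leaves S \<longleftrightarrow> (u,v) \<in> S \<and> \<not> (\<exists>s>u. (s,v) \<in> S)" if "CNM n S" for S u v
    using CNM_leaf_iff(2)[OF that] by (auto simp: cnm_leaves_def)
  have "(x,y) \<in> cnm_leaves (swap_cols a b T) \<longleftrightarrow>
      (x, transpose a b y) \<in> T \<and> \<not> (\<exists>s>x. (s, transpose a b y) \<in> T)"
    using leaf[OF T'] by simp
  also have "\<dots> \<longleftrightarrow> (x, transpose a b y) \<in> cnm_leaves T" using leaf[OF T] by simp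
  finally show "p \<in> cnm_leaves (swap_cols a b T) \<longleftrightarrow> p \<in> swap_cols a b (cnm_leaves T)"
    using p by simp
qed

lemma transpose_Suc_less_iff:
  "\<not> (i = a \<and> i' = Suc a) \<Longrightarrow> \<not> (i = Suc a \<and> i' = a) \<Longrightarrow>
    transpose a (Suc a) i < transpose a (Suc a) i' \<longleftrightarrow> i < i'"
  by (auto simp: transpose_def)

subsection \<open>Sort keys\<close>

text \<open>The second components only break ties, making the keys injective.\<close>

definition row_key :: "(nat \<times> nat) set \<Rightarrow> nat \<Rightarrow> bool list \<times> nat \<times> nat" where
  "row_key T r = (cnm_path T (r, last_in_row T r), (r, last_in_row T r))"

definition col_key :: "(nat \<times> nat) set \<Rightarrow> nat \<Rightarrow> bool list \<times> nat \<times> nat" where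
  "col_key T c = (cnm_path T (last_in_col T c, c), (last_in_col T c, c))"

lemma row_key_less:
  assumes T: "CNM n T" and rs: "r < s" and rc: "(r,c) \<in> T" and sc: "(s,c) \<in> T"
  shows "row_key T s < row_key T r"
proof -
  obtain d where "c < d" "(r,d) \<in> T" using CNM_below_iff_right[OF T rc] rs sc by blast
  then have "c < last_in_row T r" using last_in_row(2)[OF T] by (meson less_le_trans)
  then obtain B1 where B1: "cnm_path T (r, last_in_row T r) = cnm_path T (r,c) @ True # B1"
    using cnm_path_right[OF T rc last_in_row(1)[OF T rc]] by blast
  obtain B2 where B2: "cnm_path T (s,c) = cnm_path T (r,c) @ False # B2"
    using cnm_path_below[OF T rc sc rs] by blast
  have "\<exists>B3. cnm_path T (s, last_in_row T s) = cnm_path T (s,c) @ B3"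
    using cnm_path_right[OF T sc last_in_row(1)[OF T sc]] last_in_row(2)[OF T sc]
    by (cases "c = last_in_row T s") auto
  then obtain B3 where "cnm_path T (s, last_in_row T s) = cnm_path T (r,c) @ False # B2 @ B3"
    using B2 by auto
  then show ?thesis using B1 append_False_less_append_True by (simp add: row_key_def less_prod_def)
qed

lemma col_key_less:
  assumes T: "CNM n T" and cd: "c < d" and rc: "(r,c) \<in> T" and rd: "(r,d) \<in> T"
  shows "col_key T c < col_key T d"
proof -
  obtain s where "r < s" "(s,c) \<in> T" using CNM_below_iff_right[OF T rc] cd rd by blast
  then have "r < last_in_col T c" using last_in_col(2)[OF T] by (meson less_le_trans)
  then obtain B1 where B1: "cnm_path T (last_in_col T c, c) = cnm_path T (r,c) @ False # B1"
    using cnm_path_below[OF T rc last_in_col(1)[OF T rc]] by blast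
  obtain B2 where B2: "cnm_path T (r,d) = cnm_path T (r,c) @ True # B2"
    using cnm_path_right[OF T rc rd cd] by blast
  have "\<exists>B3. cnm_path T (last_in_col T d, d) = cnm_path T (r,d) @ B3"
    using cnm_path_below[OF T rd last_in_col(1)[OF T rd]] last_in_col(2)[OF T rd]
    by (cases "r = last_in_col T d") auto
  then obtain B3 where "cnm_path T (last_in_col T d, d) = cnm_path T (r,c) @ True # B2 @ B3"
    using B2 by auto
  then show ?thesis using B1 append_False_less_append_True by (simp add: col_key_def less_prod_def)
qed

definition cnm_sort_keys :: "nat \<Rightarrow> (nat \<times> nat) set \<Rightarrow> (nat \<Rightarrow> 'k::linorder) \<Rightarrow> (nat \<Rightarrow> 'k) \<Rightarrow> bool" where
  "cnm_sort_keys n T kR kC \<longleftrightarrow> CNM n T \<and> inj_on kR {1..n} \<and> inj_on kC {1..n}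
     \<and> (\<forall>r s c. r < s \<longrightarrow> (r,c) \<in> T \<longrightarrow> (s,c) \<in> T \<longrightarrow> kR s < kR r)
     \<and> (\<forall>r c d. c < d \<longrightarrow> (r,c) \<in> T \<longrightarrow> (r,d) \<in> T \<longrightarrow> kC c < kC d)
     \<and> (\<forall>r c. (r,c) \<in> cnm_leaves T \<longrightarrow> kR r = kC c)"

lemma CNM_sort_keys:
  assumes T: "CNM n T"
  shows "cnm_sort_keys n T (row_key T) (col_key T)"
proof -
  have "row_key T r = col_key T c" if "(r,c) \<in> cnm_leaves T" for r c
  proof -
    have "(r,c) \<in> T" using that by (simp add: cnm_leaves_def)
    then have "last_in_row T r = c" "last_in_col T c = r"
      using CNM_leaf_iff_last[OF T] that by metis+
    then show ?thesis by (simp add: row_key_def col_key_def)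
  qed
  moreover have "inj_on (row_key T) {1..n}" "inj_on (col_key T) {1..n}"
    by (auto intro!: inj_onI simp: row_key_def col_key_def)
  ultimately show ?thesis using T row_key_less[OF T] col_key_less[OF T]
    unfolding cnm_sort_keys_def by blast
qed

lemma cnm_sort_keys_swap_rows:
  assumes K: "cnm_sort_keys n T kR kC" and a: "a \<in> {1..<n}" and asc: "kR a < kR (Suc a)"
  shows "cnm_sort_keys n (swap_rows a (Suc a) T) (kR \<circ> transpose a (Suc a)) kC"
proof -
  let ?t = "transpose a (Suc a)" and ?T = "swap_rows a (Suc a) T"
  have T: "CNM n T" using K by (simp add: cnm_sort_keys_def)
  have disjoint: "\<not> ((a,c) \<in> T \<and> (Suc a, c) \<in> T)" for c
    \<comment> \<open>so the swap preserves the vertical order in every column\<close>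
    using K asc unfolding cnm_sort_keys_def by (meson lessI order.asym)
  then have "a \<noteq> 1" using CNM_rows_one_two_share_col[OF T] a by (metis Suc_1 Suc_leI atLeastLessThan_iff)
  have ord: "i < i' \<longleftrightarrow> ?t i < ?t i'" if "(i,j) \<in> T" "(i',j) \<in> T" for i i' j
    using disjoint that transpose_Suc_less_iff by metis
  have T': "CNM n ?T" using CNM_swap_rows[OF T _ _ _ _ ord] a \<open>a \<noteq> 1\<close> by simp
  have "inj_on (kR \<circ> ?t) {1..n}"
    using K a by (intro comp_inj_on) (auto simp: cnm_sort_keys_def)
  moreover have "kR (?t s) < kR (?t r)" if "r < s" "(r,c) \<in> ?T" "(s,c) \<in> ?T" for r s c
    using K that ord[of "?t r" c "?t s"] unfolding cnm_sort_keys_def by simp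
  moreover have "kC c < kC d" if "c < d" "(r,c) \<in> ?T" "(r,d) \<in> ?T" for r c d
    using K that unfolding cnm_sort_keys_def by simp
  moreover have "kR (?t r) = kC c" if "(r,c) \<in> cnm_leaves ?T" for r c
    using K that cnm_leaves_swap_rows[OF T T'] unfolding cnm_sort_keys_def by simp
  ultimately show ?thesis using K T' unfolding cnm_sort_keys_def by simp
qed

lemma cnm_sort_keys_swap_cols:
  assumes K: "cnm_sort_keys n T kR kC" and a: "a \<in> {1..<n}" and desc: "kC (Suc a) < kC a"
  shows "cnm_sort_keys n (swap_cols a (Suc a) T) kR (kC \<circ> transpose a (Suc a))"
proof -
  let ?t = "transpose a (Suc a)" and ?T = "swap_cols a (Suc a) T"
  have T: "CNM n T" using K by (simp add: cnm_sort_keys_def)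
  have disjoint: "\<not> ((r,a) \<in> T \<and> (r, Suc a) \<in> T)" for r
    using K desc unfolding cnm_sort_keys_def by (meson lessI order.asym)
  then have "a \<noteq> 1"
    using CNM_rows_one_two_share_col[OF CNM_transposed[OF T]] a
    by (metis Suc_1 Suc_leI atLeastLessThan_iff mem_transposed)
  have ord: "j < j' \<longleftrightarrow> ?t j < ?t j'" if "(i,j) \<in> T" "(i,j') \<in> T" for i j j'
    using disjoint that transpose_Suc_less_iff by metis
  have T': "CNM n ?T" using CNM_swap_cols[OF T _ _ _ _ ord] a \<open>a \<noteq> 1\<close> by simp
  have "inj_on (kC \<circ> ?t) {1..n}"
    using K a by (intro comp_inj_on) (auto simp: cnm_sort_keys_def)
  moreover have "kR s < kR r" if "r < s" "(r,c) \<in> ?T" "(s,c) \<in> ?T" for r s c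
    using K that unfolding cnm_sort_keys_def by simp
  moreover have "kC (?t c) < kC (?t d)" if "c < d" "(r,c) \<in> ?T" "(r,d) \<in> ?T" for r c d
    using K that ord[of r "?t c" "?t d"] unfolding cnm_sort_keys_def by simp
  moreover have "kR r = kC (?t c)" if "(r,c) \<in> cnm_leaves ?T" for r c
    using K that cnm_leaves_swap_cols[OF T T'] unfolding cnm_sort_keys_def by simp
  ultimately show ?thesis using K T' unfolding cnm_sort_keys_def by simp
qed

subsection \<open>Bubble sort\<close>

definition inversions :: "nat \<Rightarrow> ('k \<Rightarrow> 'k \<Rightarrow> bool) \<Rightarrow> (nat \<Rightarrow> 'k) \<Rightarrow> nat" where
  "inversions n P k = card {(r,s). r \<in> {1..n} \<and> s \<in> {1..n} \<and> r < s \<and> P (k r) (k s)}"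

lemma inversions_transpose_Suc_less:
  assumes a: "a \<in> {1..<n}" and inv: "P (k a) (k (Suc a))" "\<not> P (k (Suc a)) (k a)"
  shows "inversions n P (k \<circ> transpose a (Suc a)) < inversions n P k"
proof -
  let ?t = "transpose a (Suc a)"
  define I where "I k = {(r,s). r \<in> {1..n} \<and> s \<in> {1..n} \<and> r < s \<and> P (k r) (k s)}" for k
  define G where "G = (\<lambda>(r,s). (?t r, ?t s))"
  have sub: "G ` I (k \<circ> ?t) \<subseteq> I k - {(a, Suc a)}"
  proof
    fix q assume "q \<in> G ` I (k \<circ> ?t)"
    then obtain r s where q: "q = G (r,s)" and "(r,s) \<in> I (k \<circ> ?t)" by auto
    then have rs: "r \<in> {1..n}" "s \<in> {1..n}" "r < s" "P (k (?t r)) (k (?t s))" by (auto simp: I_def)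
    then have "\<not> (r = a \<and> s = Suc a)" using inv(2) by auto
    then have "?t r < ?t s" using rs(3) transpose_Suc_less_iff by simp
    moreover have "?t r \<in> {1..n}" "?t s \<in> {1..n}" using a rs by (auto simp: transpose_def)
    ultimately show "q \<in> I k - {(a, Suc a)}"
      using rs q by (auto simp: G_def I_def transpose_eq_iff)
  qed
  have fin: "finite (I k)" by (rule finite_subset[of _ "{1..n} \<times> {1..n}"]) (auto simp: I_def)
  have "inj_on G (I (k \<circ> ?t))" by (auto simp: G_def intro!: inj_onI dest: transpose_eq_imp_eq)
  then have "card (I (k \<circ> ?t)) = card (G ` I (k \<circ> ?t))" by (simp add: card_image)
  also have "\<dots> \<le> card (I k - {(a, Suc a)})" using sub fin by (simp add: card_mono)
  also have "\<dots> < card (I k)" using fin a inv(1) by (intro card_Diff1_less) (auto simp: I_def)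
  finally have "card (I (k \<circ> ?t)) < card (I k)" .
  then show ?thesis by (simp add: inversions_def I_def)
qed

lemma decreasing_self_map_eq:
  fixes \<sigma> :: "nat \<Rightarrow> nat"
  assumes into: "\<And>r. r \<in> {1..n} \<Longrightarrow> \<sigma> r \<in> {1..n}"
    and dec: "\<And>r. r \<in> {1..<n} \<Longrightarrow> \<sigma> (Suc r) < \<sigma> r" and r: "r \<in> {1..n}"
  shows "\<sigma> r = n + 1 - r"
proof -
  define g where "g x = \<sigma> x + x" for x
  have "g (Suc x) \<le> g x" if "x \<in> {1..<n}" for x using dec[OF that] by (simp add: g_def)
  then have "g n \<le> g r" "g r \<le> g 1"
    using r lift_Suc_antimono_le_ivl[of "{1..<n}" g] by auto
  moreover have "1 \<le> \<sigma> n" "\<sigma> 1 \<le> n" using into r by auto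
  ultimately show ?thesis by (simp add: g_def)
qed

lemma cnm_sort_keys_upper_diagonal:
  assumes K: "cnm_sort_keys n T kR kC"
    and rows: "\<And>a. a \<in> {1..<n} \<Longrightarrow> \<not> kR a < kR (Suc a)"
    and cols: "\<And>a. a \<in> {1..<n} \<Longrightarrow> \<not> kC (Suc a) < kC a"
  shows "upper_diagonal_CNM n T"
proof -
  have T: "CNM n T" and inj: "inj_on kR {1..n}" "inj_on kC {1..n}"
    using K by (simp_all add: cnm_sort_keys_def)
  have "kC a < kC (Suc a)" if "a \<in> {1..<n}" for a
    using cols[OF that] inj_onD[OF inj(2), of a "Suc a"] that by fastforce
  then have kC_less: "kC x < kC y" if "x < y" "x \<in> {1..n}" "y \<in> {1..n}" for x y
    using lift_Suc_mono_less_ivl[of "{1..<n}" kC x y] that by auto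
  define \<sigma> where "\<sigma> = last_in_row T"
  have leaf: "(r, \<sigma> r) \<in> cnm_leaves T" if "r \<in> {1..n}" for r
    using CNM_leaves_eq[OF T] that unfolding \<sigma>_def by blast
  have into: "\<sigma> r \<in> {1..n}" if "r \<in> {1..n}" for r
  proof -
    have "(r, \<sigma> r) \<in> T" using leaf[OF that] by (simp add: cnm_leaves_def)
    then show ?thesis using CNM_bounds(3,4)[OF T] by simp
  qed
  have key: "kR r = kC (\<sigma> r)" if "r \<in> {1..n}" for r
    using K leaf[OF that] unfolding cnm_sort_keys_def by blast
  have "\<sigma> (Suc r) < \<sigma> r" if r: "r \<in> {1..<n}" for r
  proof -
    have "kR (Suc r) < kR r" using rows[OF r] inj_onD[OF inj(1), of r "Suc r"] r by fastforce
    then have "kC (\<sigma> (Suc r)) < kC (\<sigma> r)" using key r by simp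
    moreover have "\<sigma> r \<in> {1..n}" "\<sigma> (Suc r) \<in> {1..n}" using into r by auto
    ultimately show ?thesis using kC_less[of "\<sigma> r" "\<sigma> (Suc r)"]
      by (metis linorder_neqE_nat order.asym)
  qed
  then have "\<sigma> r = n + 1 - r" if "r \<in> {1..n}" for r using decreasing_self_map_eq into that by blast
  then have "cnm_leaves T = {(i, n + 1 - i) | i. i \<in> {1..n}}"
    unfolding CNM_leaves_eq[OF T] \<sigma>_def[symmetric] by force
  with T show ?thesis by (simp add: upper_diagonal_CNM_def)
qed

definition swap_sortable :: "nat \<Rightarrow> (nat \<times> nat) set \<Rightarrow> bool" where
  "swap_sortable n M \<longleftrightarrow> (\<exists>N::nat. \<exists>Ms :: nat \<Rightarrow> (nat \<times> nat) set.
           Ms 0 = M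
         \<and> (\<forall>i\<le>N. CNM n (Ms i))
         \<and> (\<forall>i<N. row_or_col_swap n (Ms i) (Ms (Suc i)))
         \<and> upper_diagonal_CNM n (Ms N))"

lemma swap_sortable_upper_diagonal: "upper_diagonal_CNM n T \<Longrightarrow> swap_sortable n T"
  unfolding swap_sortable_def upper_diagonal_CNM_def by (intro exI[of _ 0] exI[of _ "\<lambda>_. T"]) simp

lemma swap_sortable_swap:
  assumes "CNM n T" "row_or_col_swap n T T'" "swap_sortable n T'"
  shows "swap_sortable n T"
proof -
  obtain N Ms where "Ms 0 = T'" "\<forall>i\<le>N. CNM n (Ms i)"
      "\<forall>i<N. row_or_col_swap n (Ms i) (Ms (Suc i))" "upper_diagonal_CNM n (Ms N)"
    using assms(3) unfolding swap_sortable_def by blast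
  moreover have "row_or_col_swap n (case_nat T Ms i) (case_nat T Ms (Suc i))" if "i < Suc N" for i
    using that assms(2) \<open>Ms 0 = T'\<close> \<open>\<forall>i<N. row_or_col_swap n (Ms i) (Ms (Suc i))\<close>
    by (cases i) auto
  moreover have "CNM n (case_nat T Ms i)" if "i \<le> Suc N" for i
    using that assms(1) \<open>\<forall>i\<le>N. CNM n (Ms i)\<close> by (cases i) auto
  ultimately show ?thesis unfolding swap_sortable_def
    by (intro exI[of _ "Suc N"] exI[of _ "case_nat T Ms"]) simp
qed

lemma row_or_col_swap_adjacent:
  assumes "a \<in> {1..<n}"
  shows "row_or_col_swap n T (swap_rows a (Suc a) T)" and "row_or_col_swap n T (swap_cols a (Suc a) T)"
proof -
  have "a \<in> {1..n}" "Suc a \<in> {1..n}" "a \<noteq> Suc a" using assms by auto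
  then show "row_or_col_swap n T (swap_rows a (Suc a) T)" "row_or_col_swap n T (swap_cols a (Suc a) T)"
    unfolding row_or_col_swap_def by blast+
qed

lemma swap_sortable_if_sort_keys:
  fixes kR kC :: "nat \<Rightarrow> 'k::linorder"
  assumes "cnm_sort_keys n T kR kC"
  shows "swap_sortable n T"
  using assms
proof (induction "inversions n (<) kR + inversions n (\<lambda>x y. y < x) kC" arbitrary: T kR kC
    rule: less_induct)
  case less
  have T: "CNM n T" using less.prems by (simp add: cnm_sort_keys_def)
  consider (row) a where "a \<in> {1..<n}" "kR a < kR (Suc a)"
    | (col) a where "a \<in> {1..<n}" "kC (Suc a) < kC a"
    | (sorted) "\<And>a. a \<in> {1..<n} \<Longrightarrow> \<not> kR a < kR (Suc a)" "\<And>a. a \<in> {1..<n} \<Longrightarrow> \<not> kC (Suc a) < kC a"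
    by metis
  then show ?case
  proof cases
    case (row a)
    then have "inversions n (<) (kR \<circ> transpose a (Suc a)) < inversions n (<) kR"
      by (intro inversions_transpose_Suc_less) auto
    then have "swap_sortable n (swap_rows a (Suc a) T)"
      using less.hyps[OF _ cnm_sort_keys_swap_rows[OF less.prems row]] by simp
    then show ?thesis using swap_sortable_swap[OF T row_or_col_swap_adjacent(1)[OF row(1)]] by blast
  next
    case (col a)
    then have "inversions n (\<lambda>x y. y < x) (kC \<circ> transpose a (Suc a)) < inversions n (\<lambda>x y. y < x) kC"
      by (intro inversions_transpose_Suc_less) auto
    then have "swap_sortable n (swap_cols a (Suc a) T)"
      using less.hyps[OF _ cnm_sort_keys_swap_cols[OF less.prems col]] by simp
    then show ?thesis using swap_sortable_swap[OF T row_or_col_swap_adjacent(2)[OF col(1)]] by blast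
  next
    case sorted
    then show ?thesis using swap_sortable_upper_diagonal cnm_sort_keys_upper_diagonal[OF less.prems] by blast
  qed
qed

theorem theorem4p13:
  fixes n :: nat and M :: "(nat \<times> nat) set"
  assumes "n \<ge> 1" and "CNM n M"
  shows "\<exists>N::nat. \<exists>Ms :: nat \<Rightarrow> (nat \<times> nat) set.
           Ms 0 = M
         \<and> (\<forall>i\<le>N. CNM n (Ms i))
         \<and> (\<forall>i<N. row_or_col_swap n (Ms i) (Ms (Suc i)))
         \<and> upper_diagonal_CNM n (Ms N)"
  using swap_sortable_if_sort_keys[OF CNM_sort_keys[OF assms(2)]] unfolding swap_sortable_def .

end
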